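(* Let $n\ge2$ and let $E_1,\dots,E_n,H_1,\dots,H_n$ be logically independent events with $H_i\ne\emptyset$ for all $i$. Then the set $\Pi$ of all coherent prevision assessments $(x_1,\dots,x_n,x_{1\cdots n})$ on $\mathcal F=\{E_1|H_1,\dots,E_n|H_n,\mathscr C_{1\cdots n}\}$ is $$\Pi=\{(x_1,\dots,x_n,x_{1\cdots n}):(x_1,\dots,x_n)\in[0,1]^n,\ T_L(x_1,\dots,x_n)\le x_{1\cdots n}\le T_M(x_1,\dots,x_n)\},$$ where $T_L(x_1,\dots,x_n)=\max\{\sum_{i=1}^nx_i-n+1,0\}$ and $T_M(x_1,\dots,x_n)=\min\{x_1,\dots,x_n\}$. In particular the Fréchet–Hoeffding bounds for the prevision of the conjunction are sharp.
   Context: Events are identified with their indicators; $\bar E$ is the negation of $E$ and $EH$ the conjunction. For events $E,H$ with $H\neq\emptyset$, the conditional event $E|H$ is true if $EH$ is true, false if $\bar EH$ is true, void if $\bar H$ is true; once $P(E|H)=x$ is assessed, $E|H$ is identified with the random quantity $EH+x\bar H$. More generally a finite conditional random quantity $X|H$ with assessed prevision $\mu=\mathbb P(X|H)$ is identified with $XH+\mu\bar H$. Coherence (de Finetti): a prevision assessment $(\mu_1,\dots,\mu_m)$ on a family $\{X_1|H_1,\dots,X_m|H_m\}$ is coherent iff for every choice of real stakes $s_1,\dots,s_m$ the random gain $G=\sum_{i}s_iH_i(X_i-\mu_i)$, restricted to the values it can take when $H_1\vee\dots\vee H_m$ is true, satisfies $\min G\le 0\le\max G$ (and the same holds for every subfamily).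 Events $E_1,\dots,E_n,H_1,\dots,H_n$ are logically independent if all $2^{2n}$ conjunctions of these events or their negations are nonempty. Conjunction of $n$ conditional events: for every nonempty $S\subseteq\{1,\dots,n\}$ let $x_S$ be a prevision value assigned to $\mathscr C_S=\bigwedge_{i\in S}(E_i|H_i)$ (defined recursively, $\mathscr C_{\{i\}}=E_i|H_i$, $x_{\{i\}}=x_i$). Then $\mathscr C_{1\cdots n}$ is the random quantity equal to $1$ if $\bigwedge_{i=1}^nE_iH_i$ is true; $0$ if $\bigvee_{i=1}^n\bar E_iH_i$ is true; $x_S$ if $(\bigwedge_{i\in S}\bar H_i)\wedge(\bigwedge_{i\notin S}E_iH_i)$ is true, for each nonempty strict subset $S$; and $x_{1\cdots n}=\mathbb P(\mathscr C_{1\cdots n})$ if $\bigwedge_{i=1}^n\bar H_i$ is true. The values $x_S$ of the strict sub-conjunctions are fixed (coherently assessed) beforehand; the statement concerns the assessment on $\mathcal F$. *)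

theory Defs
  imports Main "HOL-Library.Indicator_Function"
begin

text \<open>A finite family of conditional random quantities is indexed by a finite
  set I; member i is X i | C i with assessed prevision mu i.
  Only the values of X i on C i matter for the random gain.\<close>

definition coherent ::
  "'i set \<Rightarrow> ('i \<Rightarrow> 'w \<Rightarrow> real) \<Rightarrow> ('i \<Rightarrow> 'w set) \<Rightarrow> ('i \<Rightarrow> real) \<Rightarrow> bool" where
  "coherent I X C mu \<longleftrightarrow>
     (\<forall>J \<subseteq> I. J \<noteq> {} \<longrightarrow> (\<forall>s :: 'i \<Rightarrow> real.
        let G = (\<lambda>w. \<Sum>i\<in>J. s i * indicator (C i) w * (X i w - mu i)) in
        (\<exists>w \<in> (\<Union>i\<in>J. C i). G w \<le> 0) \<and> (\<exists>w \<in> (\<Union>i\<in>J. C i). G w \<ge> 0)))"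

definition log_indep :: "nat \<Rightarrow> (nat \<Rightarrow> 'w set) \<Rightarrow> (nat \<Rightarrow> 'w set) \<Rightarrow> bool" where
  "log_indep n E H \<longleftrightarrow>
     (\<forall>A \<subseteq> {1..n}. \<forall>B \<subseteq> {1..n}.
        (\<Inter>i\<in>{1..n}. if i \<in> A then E i else - E i) \<inter>
        (\<Inter>i\<in>{1..n}. if i \<in> B then H i else - H i) \<noteq> {})"

text \<open>The conjunction of the conditional events E_i|H_i, i in S, as a random
  quantity, given prevision values x T for the sub-conjunctions T.\<close>
definition conj_rv :: "(nat \<Rightarrow> 'w set) \<Rightarrow> (nat \<Rightarrow> 'w set) \<Rightarrow> (nat set \<Rightarrow> real) \<Rightarrow> nat set \<Rightarrow> 'w \<Rightarrow> real" where
  "conj_rv E H x S w =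
     (if \<exists>i\<in>S. w \<in> H i \<and> w \<notin> E i then 0
      else if {i\<in>S. w \<notin> H i} = {} then 1
      else x {i\<in>S. w \<notin> H i})"

definition conj_cond :: "(nat \<Rightarrow> 'w set) \<Rightarrow> nat set \<Rightarrow> 'w set" where
  "conj_cond H S = (\<Union>i\<in>S. H i)"

definition T_L :: "nat \<Rightarrow> (nat \<Rightarrow> real) \<Rightarrow> real" where
  "T_L n y = max ((\<Sum>i\<in>{1..n}. y i) - real n + 1) 0"

definition T_M :: "nat \<Rightarrow> (nat \<Rightarrow> real) \<Rightarrow> real" where
  "T_M n y = Min (y ` {1..n})"

end

theory Submission
  imports Defs
begin

text \<open>Necessity: if all strict sub-conjunctions satisfy the Frechet-Hoeffding bounds, the
  conjunction satisfies them pointwise with respect to its conjuncts, and a coherent assessment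
  inherits every linear inequality that holds on the conditioning events; induction over the
  sub-conjunctions does the rest. Sufficiency: by logical independence every constituent on which
  all H_i are true and exactly the E_i with i in A are true is possible; there the random gain is
  an affine function of (of_bool (A = {1..n}), indicator A) vanishing at the assessment, and the
  Frechet bounds make a nonnegative combination of its values at two or at n + 1 of these points
  nonnegative, so one of the values is nonnegative.\<close>

definition gain ::
  "'i set \<Rightarrow> ('i \<Rightarrow> 'w \<Rightarrow> real) \<Rightarrow> ('i \<Rightarrow> 'w set) \<Rightarrow> ('i \<Rightarrow> real) \<Rightarrow> ('i \<Rightarrow> real) \<Rightarrow> 'w \<Rightarrow> real" where
  "gain J X C mu s w = (\<Sum>i\<in>J. s i * indicator (C i) w * (X i w - mu i))"

definition no_dutch_book :: "'i set \<Rightarrow> ('i \<Rightarrow> 'w \<Rightarrow> real) \<Rightarrow> ('i \<Rightarrow> 'w set) \<Rightarrow> ('i \<Rightarrow> real) \<Rightarrow> bool" where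
  "no_dutch_book J X C mu \<longleftrightarrow>
     (\<forall>s. (\<exists>w\<in>(\<Union>i\<in>J. C i). gain J X C mu s w \<le> 0) \<and> (\<exists>w\<in>(\<Union>i\<in>J. C i). 0 \<le> gain J X C mu s w))"

lemma coherent_iff_no_dutch_book:
  "coherent I X C mu \<longleftrightarrow> (\<forall>J\<subseteq>I. J \<noteq> {} \<longrightarrow> no_dutch_book J X C mu)"
  by (simp add: coherent_def no_dutch_book_def gain_def Let_def)

lemma coherent_subset: "coherent I X C mu \<Longrightarrow> J \<subseteq> I \<Longrightarrow> coherent J X C mu"
  by (auto simp: coherent_iff_no_dutch_book)

lemma gain_uminus: "gain J X C mu (\<lambda>i. - s i) w = - gain J X C mu s w"
  by (simp add: gain_def sum_negf)

lemma gain_restrict: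
  assumes "finite I" and "J \<subseteq> I"
  shows "gain J X C mu s w = gain I X C mu (\<lambda>i. if i \<in> J then s i else 0) w"
  unfolding gain_def using assms by (intro sum.mono_neutral_cong_left) auto

lemma gain_identified:
  assumes "\<And>i. i \<in> J \<Longrightarrow> w \<notin> C i \<Longrightarrow> X i w = mu i"
  shows "gain J X C mu s w = (\<Sum>i\<in>J. s i * (X i w - mu i))"
  unfolding gain_def using assms by (intro sum.cong) (auto simp: indicator_def)

lemma no_dutch_book_if_gain_nonneg:
  assumes "\<And>s. \<exists>w\<in>(\<Union>i\<in>J. C i). 0 \<le> gain J X C mu s w"
  shows "no_dutch_book J X C mu"
  unfolding no_dutch_book_def
proof (intro allI conjI)
  fix s
  obtain w where "w \<in> (\<Union>i\<in>J. C i)" "0 \<le> gain J X C mu (\<lambda>i. - s i) w"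
    using assms by blast
  then show "\<exists>w\<in>(\<Union>i\<in>J. C i). gain J X C mu s w \<le> 0"
    by (auto simp: gain_uminus)
qed (use assms in blast)

text \<open>The hypothesis on X is the identification of X i | C i with X i C i + mu i (not C i).\<close>

lemma no_dutch_book_imp_linear_bound:
  assumes "no_dutch_book J X C mu"
    and "\<And>i w. i \<in> J \<Longrightarrow> w \<notin> C i \<Longrightarrow> X i w = mu i"
    and "\<And>w. w \<in> (\<Union>i\<in>J. C i) \<Longrightarrow> c \<le> (\<Sum>i\<in>J. s i * X i w)"
  shows "c \<le> (\<Sum>i\<in>J. s i * mu i)"
proof -
  obtain w where w: "w \<in> (\<Union>i\<in>J. C i)" and "gain J X C mu s w \<le> 0"
    using assms(1) unfolding no_dutch_book_def by blast
  then have "(\<Sum>i\<in>J. s i * X i w) \<le> (\<Sum>i\<in>J. s i * mu i)"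
    using assms(2) by (simp add: gain_identified right_diff_distrib sum_subtractf)
  then show ?thesis using assms(3)[OF w] by linarith
qed

definition frechet_bounds :: "'a set \<Rightarrow> ('a \<Rightarrow> real) \<Rightarrow> real \<Rightarrow> bool" where
  "frechet_bounds S y z \<longleftrightarrow> 0 \<le> z \<and> (\<Sum>i\<in>S. y i) - real (card S) + 1 \<le> z \<and> (\<forall>i\<in>S. z \<le> y i)"

lemma frechet_bounds_iff_T_L_T_M:
  "1 \<le> n \<Longrightarrow> frechet_bounds {1..n} y z \<longleftrightarrow> T_L n y \<le> z \<and> z \<le> T_M n y"
  by (auto simp: frechet_bounds_def T_L_def T_M_def)

text \<open>The Frechet region of (z, y) is the convex hull of the points (of_bool (A = S), indicator A)
  for A \<subseteq> S; vertex_gain is the value at such a point of an affine function vanishing at (z, y).\<close>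

definition vertex_gain :: "'a set \<Rightarrow> real \<Rightarrow> real \<Rightarrow> ('a \<Rightarrow> real) \<Rightarrow> ('a \<Rightarrow> real) \<Rightarrow> 'a set \<Rightarrow> real" where
  "vertex_gain S a z t y A = a * (of_bool (A = S) - z) + (\<Sum>i\<in>S. t i * (of_bool (i \<in> A) - y i))"

lemma vertex_gain_top: "vertex_gain S a z t y S = a * (1 - z) + (\<Sum>i\<in>S. t i * (1 - y i))"
  by (simp add: vertex_gain_def)

lemma vertex_gain_Diff_singleton:
  assumes "finite S" and "j \<in> S"
  shows "vertex_gain S a z t y (S - {j}) = vertex_gain S a z t y S - a - t j"
proof -
  have "(\<Sum>i\<in>S. t i * (of_bool (i \<in> S - {j}) - y i)) = (\<Sum>i\<in>S. t i * (1 - y i) - of_bool (i = j) * t i)"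
    using assms by (intro sum.cong) (auto simp: algebra_simps)
  also have "\<dots> = (\<Sum>i\<in>S. t i * (1 - y i)) - t j"
    using assms by (simp add: sum_subtractf)
  finally show ?thesis
    using assms by (auto simp: vertex_gain_def algebra_simps)
qed

lemma ex_nonneg_of_nonneg_combination:
  fixes c f :: "'a \<Rightarrow> real"
  assumes "finite I" and "0 \<le> c0" and "\<forall>i\<in>I. 0 \<le> c i" and "0 < c0 + sum c I"
    and "0 \<le> c0 * f0 + (\<Sum>i\<in>I. c i * f i)"
  shows "0 \<le> f0 \<or> (\<exists>i\<in>I. 0 \<le> f i)"
proof (rule ccontr)
  assume "\<not> ?thesis"
  then have neg: "f0 < 0" "\<forall>i\<in>I. f i < 0" by auto
  have terms_nonpos: "\<forall>i\<in>I. c i * f i \<le> 0"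
    using assms(3) neg(2) by (metis less_eq_real_def mult_nonneg_nonpos)
  have "c0 * f0 + (\<Sum>i\<in>I. c i * f i) < 0"
  proof (cases "c0 = 0")
    case True
    then obtain j where "j \<in> I" "0 < c j"
      using assms(4) sum_nonpos[of I c] by (metis add_0 not_less)
    then have "c j * f j < 0" using neg(2) by (simp add: mult_pos_neg)
    then have "(\<Sum>i\<in>I. c i * f i) < (\<Sum>i\<in>I. 0)"
      using assms(1) terms_nonpos \<open>j \<in> I\<close> by (intro sum_strict_mono_ex1) auto
    then show ?thesis using True by simp
  next
    case False
    then have "c0 * f0 < 0" using assms(2) neg(1) by (simp add: mult_pos_neg)
    moreover have "(\<Sum>i\<in>I. c i * f i) \<le> 0" using terms_nonpos by (simp add: sum_nonpos)
    ultimately show ?thesis by linarith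
  qed
  then show False using assms(5) by linarith
qed

lemma vertex_gain_nonneg_if_negative_stake:
  assumes "frechet_bounds S y z" and "\<forall>i\<in>S. y i \<le> 1" and "j \<in> S" and "t j < 0"
  shows "\<exists>A\<subseteq>S. 0 \<le> vertex_gain S a z t y A"
proof -
  define P where "P = {i\<in>S. 0 \<le> t i}"
  have z: "0 \<le> z" "z \<le> 1" and z_le: "\<forall>i\<in>S. z \<le> y i"
    using assms by (auto simp: frechet_bounds_def intro: order_trans)
  have "j \<notin> P" "P \<subseteq> S" using assms(4) by (auto simp: P_def)
  then have "P \<noteq> S" using assms(3) by blast
  then have "z * vertex_gain S a z t y S + (1 - z) * vertex_gain S a z t y P
      = (\<Sum>i\<in>S. t i * (z - y i + (1 - z) * of_bool (i \<in> P)))"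
    by (simp add: vertex_gain_def sum_distrib_left sum.distrib[symmetric] algebra_simps)
  also have "\<dots> \<ge> 0"
  proof (intro sum_nonneg)
    fix i assume i: "i \<in> S"
    show "0 \<le> t i * (z - y i + (1 - z) * of_bool (i \<in> P))"
    proof (cases "i \<in> P")
      case True
      then show ?thesis using i assms(2) by (simp add: P_def)
    next
      case False
      then show ?thesis using i z_le by (simp add: P_def mult_nonpos_nonpos)
    qed
  qed
  finally have "0 \<le> vertex_gain S a z t y S \<or> (\<exists>A\<in>{P}. 0 \<le> vertex_gain S a z t y A)"
    using z by (intro ex_nonneg_of_nonneg_combination[where c = "\<lambda>_. 1 - z"]) auto
  then show ?thesis using \<open>P \<subseteq> S\<close> by auto
qed

lemma vertex_gain_nonneg_if_nonneg_stakes: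
  assumes "finite S" and "S \<noteq> {}" and "frechet_bounds S y z" and "\<forall>i\<in>S. y i \<le> 1"
    and "\<forall>i\<in>S. 0 \<le> t i"
  shows "\<exists>A\<subseteq>S. 0 \<le> vertex_gain S a z t y A"
proof -
  define D where "D = (\<Sum>j\<in>S. 1 - y j)"
  define R where "R = (\<Sum>i\<in>S. t i * (1 - y i))"
  have D: "D = real (card S) - (\<Sum>j\<in>S. y j)" by (simp add: D_def sum_subtractf)
  have fb: "0 \<le> z" "1 - z \<le> D" "\<forall>i\<in>S. z \<le> y i"
    using assms(3) by (auto simp: frechet_bounds_def D)
  have "z \<le> 1" using fb(3) assms(2,4) by (meson all_not_in_conv order_trans)
  have "0 \<le> D" "0 \<le> R" using assms(4,5) by (auto simp: D_def R_def intro!: sum_nonneg)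
  consider (degenerate) "D = 0" | (positive) "0 < D" using \<open>0 \<le> D\<close> by linarith
  then show ?thesis
  proof cases
    case degenerate
    then have "\<forall>j\<in>S. y j = 1"
      using assms(1,4) sum_nonneg_eq_0_iff[of S "\<lambda>j. 1 - y j"] by (auto simp: D_def)
    moreover have "z = 1" using calculation fb degenerate assms(2) by (simp add: D) (meson all_not_in_conv order_antisym)
    ultimately have "vertex_gain S a z t y S = 0"
      by (simp add: vertex_gain_top)
    then show ?thesis by auto
  next
    case positive
    have "D * z * vertex_gain S a z t y S
        + (\<Sum>j\<in>S. (1 - z) * (1 - y j) * vertex_gain S a z t y (S - {j})) = R * (D - 1 + z)"
      using assms(1)
      by (simp add: vertex_gain_Diff_singleton vertex_gain_top algebra_simps sum.distrib
          sum_subtractf sum_distrib_left[symmetric] sum_distrib_right[symmetric] D_def R_def)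
    also have "\<dots> \<ge> 0" using \<open>0 \<le> R\<close> fb by simp
    finally have combination: "0 \<le> D * z * vertex_gain S a z t y S
        + (\<Sum>j\<in>S. (1 - z) * (1 - y j) * vertex_gain S a z t y (S - {j}))" .
    have "(\<Sum>j\<in>S. (1 - z) * (1 - y j)) = (1 - z) * D"
      by (simp add: D_def sum_distrib_left)
    then have "D * z + (\<Sum>j\<in>S. (1 - z) * (1 - y j)) = D"
      by (simp add: algebra_simps)
    then have "0 \<le> vertex_gain S a z t y S \<or> (\<exists>j\<in>S. 0 \<le> vertex_gain S a z t y (S - {j}))"
      using assms(4) fb \<open>z \<le> 1\<close> positive
      by (intro ex_nonneg_of_nonneg_combination[OF assms(1) _ _ _ combination]) auto
    then show ?thesis by blast
  qed
qed

lemma frechet_bounds_imp_vertex_gain_nonneg: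
  assumes "finite S" and "S \<noteq> {}" and "frechet_bounds S y z" and "\<forall>i\<in>S. y i \<le> 1"
  shows "\<exists>A\<subseteq>S. 0 \<le> vertex_gain S a z t y A"
proof (cases "\<exists>j\<in>S. t j < 0")
  case True
  then obtain j where "j \<in> S" "t j < 0" by blast
  then show ?thesis using vertex_gain_nonneg_if_negative_stake[OF assms(3,4)] by blast
next
  case False
  then show ?thesis using assms by (intro vertex_gain_nonneg_if_nonneg_stakes) (auto simp: not_less)
qed

lemma sum_insert_singletons:
  assumes "finite S" and "\<And>i. S \<noteq> {i}"
  shows "(\<Sum>T\<in>insert S ((\<lambda>i. {i}) ` S). f T) = f S + (\<Sum>i\<in>S. f {i})"
proof -
  have "S \<notin> (\<lambda>i. {i}) ` S" using assms(2) by blast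
  then show ?thesis using assms(1) by (simp add: sum.reindex)
qed

lemma atLeastAtMost_ne_singleton:
  assumes "2 \<le> n"
  shows "{1..n} \<noteq> {i :: nat}"
proof
  assume "{1..n} = {i}"
  moreover have "1 \<in> {1..n}" "2 \<in> {1..n}" using assms by auto
  ultimately show False by auto
qed

lemma log_indep_constituent:
  assumes "log_indep n E H" and "A \<subseteq> {1..n}"
  obtains w where "\<And>i. i \<in> {1..n} \<Longrightarrow> w \<in> H i" and "\<And>i. i \<in> {1..n} \<Longrightarrow> w \<in> E i \<longleftrightarrow> i \<in> A"
proof -
  obtain w where wE: "w \<in> (\<Inter>i\<in>{1..n}. if i \<in> A then E i else - E i)"
    and wH: "w \<in> (\<Inter>i\<in>{1..n}. if i \<in> {1..n} then H i else - H i)"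
    using assms unfolding log_indep_def by blast
  have "w \<in> H i" if "i \<in> {1..n}" for i
    using wH that by auto
  moreover have "w \<in> E i \<longleftrightarrow> i \<in> A" if "i \<in> {1..n}" for i
    using wE that by (cases "i \<in> A") auto
  ultimately show ?thesis using that by blast
qed

lemma conj_rv_singleton:
  "conj_rv E H x {i} w = (if w \<in> H i then of_bool (w \<in> E i) else x {i})"
proof -
  have "{j\<in>{i}. w \<notin> H j} = (if w \<in> H i then {} else {i})" by auto
  then show ?thesis by (simp add: conj_rv_def)
qed

lemma conj_rv_outside_cond:
  assumes "T \<noteq> {}" and "w \<notin> conj_cond H T"
  shows "conj_rv E H x T w = x T"
proof -
  have "{i\<in>T. w \<notin> H i} = T" using assms(2) by (auto simp: conj_cond_def)
  then show ?thesis using assms by (auto simp: conj_rv_def conj_cond_def)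
qed

context
  fixes E H :: "nat \<Rightarrow> 'w set" and x :: "nat set \<Rightarrow> real"
begin

abbreviation conj_frechet :: "nat set \<Rightarrow> bool" where
  "conj_frechet T \<equiv> frechet_bounds T (\<lambda>i. x {i}) (x T)"

abbreviation conj_coherent :: "nat set set \<Rightarrow> bool" where
  "conj_coherent I \<equiv> coherent I (conj_rv E H x) (conj_cond H) x"

lemma conj_rv_nonneg:
  assumes "w \<in> conj_cond H S" and "\<And>T. T \<noteq> {} \<Longrightarrow> T \<subset> S \<Longrightarrow> conj_frechet T"
  shows "0 \<le> conj_rv E H x S w"
proof -
  have "{i\<in>S. w \<notin> H i} \<subset> S" using assms(1) by (auto simp: conj_cond_def)
  then show ?thesis using assms(2) by (auto simp: conj_rv_def frechet_bounds_def)
qed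

lemma conj_rv_le_singleton:
  assumes "w \<in> conj_cond H S" and "\<And>T. T \<noteq> {} \<Longrightarrow> T \<subset> S \<Longrightarrow> conj_frechet T"
    and "\<forall>j\<in>S. x {j} \<le> 1" and "i \<in> S"
  shows "conj_rv E H x S w \<le> conj_rv E H x {i} w"
proof -
  define F where "F = {j\<in>S. w \<notin> H j}"
  have "F \<subset> S" using assms(1) by (auto simp: F_def conj_cond_def)
  then have bounds: "0 \<le> x F \<and> x F \<le> x {j}" if "j \<in> F" for j
    using assms(2)[of F] that by (auto simp: frechet_bounds_def)
  have rv_value: "conj_rv E H x S w = (if \<exists>j\<in>S. w \<in> H j \<and> w \<notin> E j then 0 else if F = {} then 1 else x F)"
    by (simp only: conj_rv_def F_def)
  consider (refuted) "w \<in> H i" "w \<notin> E i" | (verified) "w \<in> H i" "w \<in> E i" | (void) "w \<notin> H i"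
    by blast
  then show ?thesis
  proof cases
    case refuted
    then show ?thesis using assms(4) rv_value by (auto simp: conj_rv_singleton)
  next
    case verified
    have "x F \<le> 1" if nonempty: "F \<noteq> {}"
    proof -
      obtain j where "j \<in> F" using nonempty by blast
      then show ?thesis using bounds[of j] assms(3) \<open>F \<subset> S\<close> by fastforce
    qed
    then show ?thesis using rv_value verified by (auto simp: conj_rv_singleton)
  next
    case void
    then have "i \<in> F" using assms(4) by (simp add: F_def)
    then show ?thesis using rv_value bounds[of i] void by (auto simp: conj_rv_singleton)
  qed
qed

lemma conj_rv_ge_lukasiewicz:
  assumes "finite S" and "w \<in> conj_cond H S" and "\<And>T. T \<noteq> {} \<Longrightarrow> T \<subset> S \<Longrightarrow> conj_frechet T"
    and "\<forall>j\<in>S. x {j} \<le> 1"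
  shows "(\<Sum>i\<in>S. conj_rv E H x {i} w) - real (card S) + 1 \<le> conj_rv E H x S w"
proof (cases "\<exists>i\<in>S. w \<in> H i \<and> w \<notin> E i")
  case True
  then obtain i where i: "i \<in> S" "conj_rv E H x {i} w = 0" and "conj_rv E H x S w = 0"
    by (auto simp: conj_rv_def)
  have "(\<Sum>j\<in>S. conj_rv E H x {j} w) = (\<Sum>j\<in>S - {i}. conj_rv E H x {j} w)"
    using assms(1) i by (simp add: sum.remove)
  also have "\<dots> \<le> real (card (S - {i})) * 1"
    using assms(4) by (intro sum_bounded_above) (auto simp: conj_rv_singleton)
  finally show ?thesis
    using assms(1) i \<open>conj_rv E H x S w = 0\<close> card_Diff_singleton[of i S] card_gt_0_iff[of S]
    by auto
next
  case False
  define F where "F = {j\<in>S. w \<notin> H j}"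
  have "F \<subset> S" using assms(2) by (auto simp: F_def conj_cond_def)
  have "finite F" using assms(1) \<open>F \<subset> S\<close> finite_subset by blast
  have rv_value: "conj_rv E H x S w = (if F = {} then 1 else x F)"
    by (simp only: conj_rv_def F_def[symmetric] False if_False)
  have "(\<Sum>j\<in>S. conj_rv E H x {j} w) = (\<Sum>j\<in>S. if j \<in> F then x {j} else 1)"
    using False by (intro sum.cong) (auto simp: F_def conj_rv_singleton)
  also have "\<dots> = (\<Sum>j\<in>S - F. 1) + (\<Sum>j\<in>F. x {j})"
    using assms(1) \<open>F \<subset> S\<close> by (simp add: sum.subset_diff[of F S])
  also have "\<dots> = (\<Sum>j\<in>F. x {j}) + real (card S) - real (card F)"
    using assms(1) \<open>F \<subset> S\<close> \<open>finite F\<close> by (simp add: card_Diff_subset card_mono)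
  finally show ?thesis
    using assms(3)[of F] \<open>F \<subset> S\<close> rv_value by (auto simp: frechet_bounds_def)
qed

lemma conj_rv_frechet_bounds:
  assumes "finite S" and "w \<in> conj_cond H S" and "\<And>T. T \<noteq> {} \<Longrightarrow> T \<subset> S \<Longrightarrow> conj_frechet T"
    and "\<forall>j\<in>S. x {j} \<le> 1"
  shows "frechet_bounds S (\<lambda>i. conj_rv E H x {i} w) (conj_rv E H x S w)"
  unfolding frechet_bounds_def
  using conj_rv_nonneg[OF assms(2,3)] conj_rv_le_singleton[OF assms(2,3,4)]
    conj_rv_ge_lukasiewicz[OF assms] by blast

lemma no_dutch_book_imp_conj_linear_bound:
  assumes "conj_coherent I" and "J \<subseteq> I" and "J \<noteq> {}" and "{} \<notin> J"
    and "\<And>w. w \<in> (\<Union>T\<in>J. conj_cond H T) \<Longrightarrow> c \<le> (\<Sum>T\<in>J. s T * conj_rv E H x T w)"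
  shows "c \<le> (\<Sum>T\<in>J. s T * x T)"
proof (rule no_dutch_book_imp_linear_bound)
  show "no_dutch_book J (conj_rv E H x) (conj_cond H) x"
    using assms(1-3) unfolding coherent_iff_no_dutch_book by blast
  show "conj_rv E H x T w = x T" if "T \<in> J" and "w \<notin> conj_cond H T" for T w
    using that assms(4) by (intro conj_rv_outside_cond) auto
qed (rule assms(5))

lemma singleton_prevision_bounds:
  assumes "conj_coherent {{i}}"
  shows "0 \<le> x {i} \<and> x {i} \<le> 1"
proof
  show "0 \<le> x {i}"
    using no_dutch_book_imp_conj_linear_bound[OF assms, of "{{i}}" 0 "\<lambda>_. 1"]
    by (simp add: conj_rv_singleton conj_cond_def)
  show "x {i} \<le> 1"
    using no_dutch_book_imp_conj_linear_bound[OF assms, of "{{i}}" "-1" "\<lambda>_. -1"]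
    by (simp add: conj_rv_singleton conj_cond_def)
qed

lemma frechet_bounds_of_coherent:
  assumes "finite S" and "2 \<le> card S" and "conj_coherent (insert S ((\<lambda>i. {i}) ` S))"
    and "\<And>T. T \<noteq> {} \<Longrightarrow> T \<subset> S \<Longrightarrow> conj_frechet T" and "\<forall>j\<in>S. x {j} \<le> 1"
  shows "conj_frechet S"
proof -
  have S: "S \<noteq> {}" "\<And>i. S \<noteq> {i}" using assms(2) by auto
  have pointwise: "frechet_bounds S (\<lambda>i. conj_rv E H x {i} w) (conj_rv E H x S w)"
    if "w \<in> (\<Union>T\<in>J. conj_cond H T)" and "J \<subseteq> insert S ((\<lambda>i. {i}) ` S)" for w J
  proof -
    have "w \<in> conj_cond H S" using that by (auto simp: conj_cond_def)
    then show ?thesis using conj_rv_frechet_bounds[OF assms(1) _ assms(4,5)] by blast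
  qed
  note bound = no_dutch_book_imp_conj_linear_bound[OF assms(3)]
  have "0 \<le> x S"
  proof -
    have "0 \<le> (\<Sum>T\<in>{S}. 1 * conj_rv E H x T w)" if "w \<in> (\<Union>T\<in>{S}. conj_cond H T)" for w
      using pointwise[OF that] by (simp add: frechet_bounds_def)
    then have "0 \<le> (\<Sum>T\<in>{S}. 1 * x T)" using S by (intro bound) auto
    then show ?thesis by simp
  qed
  moreover have "x S \<le> x {i}" if i: "i \<in> S" for i
  proof -
    let ?s = "\<lambda>T. if S = T then -1 else 1"
    have "0 \<le> (\<Sum>T\<in>{S, {i}}. ?s T * conj_rv E H x T w)"
      if "w \<in> (\<Union>T\<in>{S, {i}}. conj_cond H T)" for w
      using pointwise[OF that] i S(2)[of i] by (simp add: frechet_bounds_def)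
    then have "0 \<le> (\<Sum>T\<in>{S, {i}}. ?s T * x T)" using S i by (intro bound) auto
    then show ?thesis using S(2)[of i] by simp
  qed
  moreover have "(\<Sum>i\<in>S. x {i}) - real (card S) + 1 \<le> x S"
  proof -
    let ?J = "insert S ((\<lambda>i. {i}) ` S)" and ?s = "\<lambda>T. if S = T then 1 else -1"
    have "1 - real (card S) \<le> (\<Sum>T\<in>?J. ?s T * conj_rv E H x T w)"
      if "w \<in> (\<Union>T\<in>?J. conj_cond H T)" for w
      using pointwise[OF that] S assms(1)
      by (simp add: frechet_bounds_def sum_insert_singletons sum_negf)
    then have "1 - real (card S) \<le> (\<Sum>T\<in>?J. ?s T * x T)" using S by (intro bound) auto
    then show ?thesis using S assms(1) by (simp add: sum_insert_singletons sum_negf)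
  qed
  ultimately show ?thesis by (auto simp: frechet_bounds_def)
qed

lemma singleton_prevision_bounds_of_strict_coherent:
  assumes "conj_coherent {T. T \<noteq> {} \<and> T \<subset> U}" and "{i} \<subset> U"
  shows "0 \<le> x {i} \<and> x {i} \<le> 1"
  using assms by (intro singleton_prevision_bounds coherent_subset[OF assms(1)]) auto

lemma frechet_bounds_of_strict_coherent:
  assumes "conj_coherent {T. T \<noteq> {} \<and> T \<subset> U}" and "finite U"
    and "T \<noteq> {}" and "T \<subset> U"
  shows "conj_frechet T"
proof -
  have "finite T" using assms(2,4) by (meson finite_subset psubset_imp_subset)
  then show ?thesis using assms(3,4)
  proof (induction T rule: finite_psubset_induct)
    case (psubset T)
    show ?case
    proof (cases "card T = 1")
      case True
      then obtain i where "T = {i}" by (auto simp: card_Suc_eq)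
      then show ?thesis
        using singleton_prevision_bounds_of_strict_coherent[OF assms(1)] psubset.prems(2)
        by (simp add: frechet_bounds_def)
    next
      case False
      moreover have "card T \<noteq> 0" using psubset.hyps psubset.prems(1) by simp
      ultimately have "2 \<le> card T" by linarith
      have singleton_strict: "{i} \<subset> U" if "i \<in> T" for i
      proof -
        have "{i} \<noteq> U"
        proof
          assume "{i} = U"
          then have "card T \<le> card {i}" using psubset.prems(2) by (intro card_mono) auto
          then show False using \<open>2 \<le> card T\<close> by simp
        qed
        then show ?thesis using that psubset.prems(2) by blast
      qed
      have "insert T ((\<lambda>i. {i}) ` T) \<subseteq> {T. T \<noteq> {} \<and> T \<subset> U}"
        using psubset.prems singleton_strict by auto
      then have coherent: "conj_coherent (insert T ((\<lambda>i. {i}) ` T))"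
        by (rule coherent_subset[OF assms(1)])
      have strict_frechet: "conj_frechet B" if "B \<noteq> {}" and "B \<subset> T" for B
        using psubset.IH[OF that(2,1) psubset_trans[OF that(2) psubset.prems(2)]] .
      have "\<forall>i\<in>T. x {i} \<le> 1"
        using singleton_prevision_bounds_of_strict_coherent[OF assms(1) singleton_strict] by blast
      then show ?thesis
        using frechet_bounds_of_coherent[OF \<open>finite T\<close> \<open>2 \<le> card T\<close> coherent strict_frechet] by blast
    qed
  qed
qed

lemma gain_conj_family_at_constituent:
  assumes "2 \<le> n" and "\<And>i. i \<in> {1..n} \<Longrightarrow> w \<in> H i" and "\<And>i. i \<in> {1..n} \<Longrightarrow> w \<in> E i \<longleftrightarrow> i \<in> A"
    and "A \<subseteq> {1..n}"
  shows "gain (insert {1..n} ((\<lambda>i. {i}) ` {1..n})) (conj_rv E H x) (conj_cond H) x s w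
    = vertex_gain {1..n} (s {1..n}) (x {1..n}) (\<lambda>i. s {i}) (\<lambda>i. x {i}) A"
    (is "gain ?F _ _ _ _ _ = _")
proof -
  have "gain ?F (conj_rv E H x) (conj_cond H) x s w = (\<Sum>T\<in>?F. s T * (conj_rv E H x T w - x T))"
    using assms(1) by (intro gain_identified conj_rv_outside_cond) auto
  also have "\<dots> = s {1..n} * (conj_rv E H x {1..n} w - x {1..n})
      + (\<Sum>i\<in>{1..n}. s {i} * (conj_rv E H x {i} w - x {i}))"
    using atLeastAtMost_ne_singleton[OF assms(1)] by (intro sum_insert_singletons) auto
  also have "conj_rv E H x {1..n} w = of_bool (A = {1..n})"
    using assms(2-4) by (auto simp: conj_rv_def)
  also have "(\<Sum>i\<in>{1..n}. s {i} * (conj_rv E H x {i} w - x {i}))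
      = (\<Sum>i\<in>{1..n}. s {i} * (of_bool (i \<in> A) - x {i}))"
    using assms(2,3) by (intro sum.cong) (auto simp: conj_rv_singleton)
  finally show ?thesis by (simp add: vertex_gain_def)
qed

lemma coherent_conj_family_if_frechet:
  assumes "2 \<le> n" and "log_indep n E H" and "\<forall>i\<in>{1..n}. x {i} \<le> 1" and "conj_frechet {1..n}"
  shows "conj_coherent (insert {1..n} ((\<lambda>i. {i}) ` {1..n}))" (is "conj_coherent ?F")
  unfolding coherent_iff_no_dutch_book
proof (intro allI impI no_dutch_book_if_gain_nonneg)
  fix J :: "nat set set" and s :: "nat set \<Rightarrow> real"
  assume J: "J \<subseteq> ?F" "J \<noteq> {}"
  define s' where "s' T = (if T \<in> J then s T else 0)" for T
  have "{1..n} \<noteq> {}" using assms(1) by simp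
  then obtain A where A: "A \<subseteq> {1..n}"
    and nonneg: "0 \<le> vertex_gain {1..n} (s' {1..n}) (x {1..n}) (\<lambda>i. s' {i}) (\<lambda>i. x {i}) A"
    using frechet_bounds_imp_vertex_gain_nonneg[OF finite_atLeastAtMost _ assms(4) assms(3),
        of "s' {1..n}" "\<lambda>i. s' {i}"] by blast
  obtain w where w: "\<And>i. i \<in> {1..n} \<Longrightarrow> w \<in> H i" "\<And>i. i \<in> {1..n} \<Longrightarrow> w \<in> E i \<longleftrightarrow> i \<in> A"
    using log_indep_constituent[OF assms(2) A] by blast
  have w_cond: "w \<in> (\<Union>T\<in>J. conj_cond H T)"
  proof -
    obtain T where "T \<in> J" using J by blast
    then obtain i where "i \<in> T" "i \<in> {1..n}" using J assms(1) by fastforce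
    then show ?thesis using \<open>T \<in> J\<close> w(1) by (auto simp: conj_cond_def)
  qed
  have "gain J (conj_rv E H x) (conj_cond H) x s w = gain ?F (conj_rv E H x) (conj_cond H) x s' w"
    unfolding s'_def using J by (intro gain_restrict) auto
  also have "\<dots> = vertex_gain {1..n} (s' {1..n}) (x {1..n}) (\<lambda>i. s' {i}) (\<lambda>i. x {i}) A"
    by (rule gain_conj_family_at_constituent[OF assms(1) w A])
  finally have "0 \<le> gain J (conj_rv E H x) (conj_cond H) x s w" using nonneg by simp
  with w_cond show "\<exists>w\<in>(\<Union>T\<in>J. conj_cond H T). 0 \<le> gain J (conj_rv E H x) (conj_cond H) x s w"
    by blast
qed

end

theorem theorem10:
  fixes n :: nat and E H :: "nat \<Rightarrow> 'w set" and x :: "nat set \<Rightarrow> real"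
  assumes "n \<ge> 2"
    and "log_indep n E H"
    and "\<forall>i\<in>{1..n}. H i \<noteq> {}"
    and "coherent {S. S \<noteq> {} \<and> S \<subset> {1..n}} (conj_rv E H x) (conj_cond H) x"
  shows "coherent ({{i} | i. i \<in> {1..n}} \<union> {{1..n}}) (conj_rv E H x) (conj_cond H) x
     \<longleftrightarrow> (\<forall>i\<in>{1..n}. 0 \<le> x {i} \<and> x {i} \<le> 1)
         \<and> T_L n (\<lambda>i. x {i}) \<le> x {1..n} \<and> x {1..n} \<le> T_M n (\<lambda>i. x {i})"
proof -
  let ?F = "insert {1..n} ((\<lambda>i. {i}) ` {1..n})"
  have family: "{{i} | i. i \<in> {1..n}} \<union> {{1..n}} = ?F" by auto
  have single: "0 \<le> x {i} \<and> x {i} \<le> 1" if "i \<in> {1..n}" for i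
  proof (rule singleton_prevision_bounds_of_strict_coherent[OF assms(4)])
    show "{i} \<subset> {1..n}" using that atLeastAtMost_ne_singleton[OF assms(1), of i] by blast
  qed
  have strict: "frechet_bounds T (\<lambda>i. x {i}) (x T)" if "T \<noteq> {}" and "T \<subset> {1..n}" for T
    using frechet_bounds_of_strict_coherent[OF assms(4)] that by simp
  have "coherent ?F (conj_rv E H x) (conj_cond H) x \<longleftrightarrow> frechet_bounds {1..n} (\<lambda>i. x {i}) (x {1..n})"
  proof
    assume "coherent ?F (conj_rv E H x) (conj_cond H) x"
    moreover have "2 \<le> card {1..n}" using assms(1) by simp
    ultimately show "frechet_bounds {1..n} (\<lambda>i. x {i}) (x {1..n})"
      using frechet_bounds_of_coherent[OF finite_atLeastAtMost _ _ strict] single by blast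
  next
    assume "frechet_bounds {1..n} (\<lambda>i. x {i}) (x {1..n})"
    then show "coherent ?F (conj_rv E H x) (conj_cond H) x"
      using coherent_conj_family_if_frechet[OF assms(1,2)] single by blast
  qed
  then show ?thesis
    using single frechet_bounds_iff_T_L_T_M[of n] assms(1) unfolding family by auto
qed

end
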